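(* Let $G=(V,E)$ be a connected graph and $1\le k\le |V|$. Let $D\subseteq V$ be such that every $v\in D$ is dominated by some $u\in V\setminus D$, and $|V\setminus D|\ge k$. Let $S\subseteq V\setminus D$ with $|S|=k$ be a local optimum with respect to swaps restricted to $V\setminus D$, i.e. for all $s\in S$ and all $o\in (V\setminus D)\setminus S$ we have $f((S\setminus\{s\})\cup\{o\})\ge f(S)$. Then $$f(S)\le 5\cdot \min\{f(T): T\subseteq V,\ |T|=k\},$$ equivalently $c(S)\ge \tfrac15\max\{c(T):T\subseteq V,\ |T|=k\}$.
   Context: Graphs are finite, undirected, unweighted, without self-loops, connected. $\mathrm{dist}$ is the shortest-path distance, $\mathrm{dist}(u,S)=\min_{s\in S}\mathrm{dist}(u,s)$, group farness $f(S)=\sum_{u\in V}\mathrm{dist}(u,S)$, and group closeness $c(S)=(|V|-|S|)/f(S)$. $N[v]$ is the closed neighborhood of $v$, and $u$ dominates $v$ if $N[v]\subseteq N[u]$. *)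

theory Defs
  imports Main
begin

definition simple_graph :: "'a set \<Rightarrow> ('a \<Rightarrow> 'a \<Rightarrow> bool) \<Rightarrow> bool" where
  "simple_graph V E \<longleftrightarrow> finite V \<and> V \<noteq> {} \<and>
     (\<forall>u v. E u v \<longrightarrow> u \<in> V \<and> v \<in> V) \<and>
     (\<forall>u v. E u v \<longrightarrow> E v u) \<and> (\<forall>v. \<not> E v v)"

definition is_walk :: "'a set \<Rightarrow> ('a \<Rightarrow> 'a \<Rightarrow> bool) \<Rightarrow> 'a list \<Rightarrow> bool" where
  "is_walk V E xs \<longleftrightarrow> xs \<noteq> [] \<and> set xs \<subseteq> V \<and>
     (\<forall>i. Suc i < length xs \<longrightarrow> E (xs ! i) (xs ! Suc i))"

definition connected_graph :: "'a set \<Rightarrow> ('a \<Rightarrow> 'a \<Rightarrow> bool) \<Rightarrow> bool" where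
  "connected_graph V E \<longleftrightarrow> simple_graph V E \<and>
     (\<forall>u\<in>V. \<forall>v\<in>V. \<exists>xs. is_walk V E xs \<and> hd xs = u \<and> last xs = v)"

definition dist :: "'a set \<Rightarrow> ('a \<Rightarrow> 'a \<Rightarrow> bool) \<Rightarrow> 'a \<Rightarrow> 'a \<Rightarrow> nat" where
  "dist V E u v = (LEAST n. \<exists>xs. is_walk V E xs \<and> hd xs = u \<and> last xs = v \<and> length xs = Suc n)"

definition dist_set :: "'a set \<Rightarrow> ('a \<Rightarrow> 'a \<Rightarrow> bool) \<Rightarrow> 'a \<Rightarrow> 'a set \<Rightarrow> nat" where
  "dist_set V E u S = Min (dist V E u ` S)"

definition farness :: "'a set \<Rightarrow> ('a \<Rightarrow> 'a \<Rightarrow> bool) \<Rightarrow> 'a set \<Rightarrow> nat" where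
  "farness V E S = (\<Sum>u\<in>V. dist_set V E u S)"

definition closed_nbhd :: "('a \<Rightarrow> 'a \<Rightarrow> bool) \<Rightarrow> 'a \<Rightarrow> 'a set" where
  "closed_nbhd E v = insert v {w. E v w}"

definition dominates :: "('a \<Rightarrow> 'a \<Rightarrow> bool) \<Rightarrow> 'a \<Rightarrow> 'a \<Rightarrow> bool" where
  "dominates E u v \<longleftrightarrow> closed_nbhd E v \<subseteq> closed_nbhd E u"

end

theory Submission
  imports Defs
begin

text \<open>Replacing each vertex of D in an optimal group T by a vertex of V - D dominating it
  does not increase farness, because a shortest path ending in a dominated vertex can be
  redirected to its dominator.  So it suffices to compare S with a group Y \<subseteq> V - D, and
  this is the local-search analysis of Arya et al. for k-median, valid for any metric:
  pair the vertices of Y with vertices of S, each used at most twice and never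
  capturing (serving more than half of the clients of) another vertex of Y.  Summing the
  k swap inequalities, with the clients of the removed vertex rerouted along a
  permutation of the clients of each vertex of Y, gives f(S) \<le> f(Y) + 2 (2 f(Y)) = 5 f(Y).\<close>

section \<open>Walks and distances\<close>

lemma connected_graph_finite: "connected_graph V E \<Longrightarrow> finite V"
  by (simp add: connected_graph_def simple_graph_def)

lemma connected_graph_sym: "connected_graph V E \<Longrightarrow> E u v \<Longrightarrow> E v u"
  by (simp add: connected_graph_def simple_graph_def)

lemma is_walk_Cons:
  "is_walk V E (x # xs) \<longleftrightarrow> x \<in> V \<and> (xs = [] \<or> E x (hd xs) \<and> is_walk V E xs)"
  by (cases xs) (auto simp: is_walk_def nth_Cons split: nat.splits)

lemma is_walk_singleton: "is_walk V E [x] \<longleftrightarrow> x \<in> V"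
  by (simp add: is_walk_Cons)

lemma is_walk_append:
  assumes "xs \<noteq> []" "ys \<noteq> []"
  shows "is_walk V E (xs @ ys) \<longleftrightarrow> is_walk V E xs \<and> is_walk V E ys \<and> E (last xs) (hd ys)"
  using assms by (induction xs rule: list_nonempty_induct) (auto simp: is_walk_Cons)

lemma is_walk_rev:
  assumes "connected_graph V E" "is_walk V E xs"
  shows "is_walk V E (rev xs)"
  using assms(2)
proof (induction xs)
  case (Cons x xs)
  then show ?case
    by (cases "xs = []")
      (auto simp: is_walk_Cons is_walk_append last_rev connected_graph_sym[OF assms(1)])
qed (simp add: is_walk_def)

lemma dist_le_walk:
  assumes "is_walk V E xs" "hd xs = u" "last xs = v"
  shows "dist V E u v \<le> length xs - 1"
  unfolding dist_def
  by (rule Least_le) (use assms in \<open>auto simp: is_walk_def intro!: exI[of _ xs]\<close>)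

lemma obtain_shortest_walk:
  assumes "connected_graph V E" "u \<in> V" "v \<in> V"
  obtains xs where "is_walk V E xs" "hd xs = u" "last xs = v" "length xs = Suc (dist V E u v)"
proof -
  obtain xs where "is_walk V E xs" "hd xs = u" "last xs = v"
    using assms unfolding connected_graph_def by blast
  then have "\<exists>n xs. is_walk V E xs \<and> hd xs = u \<and> last xs = v \<and> length xs = Suc n"
    by (metis Suc_diff_1 is_walk_def length_greater_0_conv)
  from LeastI_ex[OF this] show ?thesis
    using that unfolding dist_def by blast
qed

lemma dist_self: "u \<in> V \<Longrightarrow> dist V E u u = 0"
  using dist_le_walk[of V E "[u]" u u] by (simp add: is_walk_singleton)

lemma dist_eq_0_iff:
  assumes "connected_graph V E" "u \<in> V" "v \<in> V"
  shows "dist V E u v = 0 \<longleftrightarrow> u = v"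
proof
  assume "dist V E u v = 0"
  then obtain xs where "hd xs = u" "last xs = v" "length xs = 1"
    using obtain_shortest_walk[OF assms] by (metis One_nat_def)
  then show "u = v" by (cases xs) auto
qed (use dist_self assms in auto)

lemma dist_triangle:
  assumes "connected_graph V E" "u \<in> V" "v \<in> V" "w \<in> V"
  shows "dist V E u w \<le> dist V E u v + dist V E v w"
proof -
  obtain xs where xs: "is_walk V E xs" "hd xs = u" "last xs = v" "length xs = Suc (dist V E u v)"
    using obtain_shortest_walk[OF assms(1-3)] .
  obtain ys where ys: "is_walk V E ys" "hd ys = v" "last ys = w" "length ys = Suc (dist V E v w)"
    using obtain_shortest_walk[OF assms(1,3,4)] .
  show ?thesis
  proof (cases "tl ys")
    case Nil
    then have "ys = [v]" using ys by (cases ys) auto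
    then show ?thesis using dist_le_walk[OF xs(1-2)] xs ys by auto
  next
    case (Cons y r)
    then have ys_eq: "ys = v # y # r" using ys by (cases ys) auto
    have "xs \<noteq> []" using xs(1) by (simp add: is_walk_def)
    then have "is_walk V E (xs @ y # r)"
      using xs ys ys_eq by (auto simp: is_walk_append is_walk_Cons)
    moreover have "hd (xs @ y # r) = u" "last (xs @ y # r) = w"
      using xs ys ys_eq by (cases xs; auto)+
    ultimately show ?thesis using dist_le_walk xs ys ys_eq by fastforce
  qed
qed

lemma dist_commute:
  assumes "connected_graph V E" "u \<in> V" "v \<in> V"
  shows "dist V E u v = dist V E v u"
proof -
  have "dist V E a b \<le> dist V E b a" if ab: "a \<in> V" "b \<in> V" for a b
  proof -
    obtain xs where xs: "is_walk V E xs" "hd xs = b" "last xs = a" "length xs = Suc (dist V E b a)"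
      using obtain_shortest_walk[OF assms(1) ab(2,1)] .
    then show ?thesis
      using dist_le_walk[OF is_walk_rev[OF assms(1) xs(1)]] by (simp add: hd_rev last_rev)
  qed
  then show ?thesis using assms(2,3) by (simp add: order_antisym)
qed

lemma dominates_adjacent:
  assumes "connected_graph V E" "dominates E u v" "u \<noteq> v"
  shows "E v u"
  using assms connected_graph_sym[OF assms(1)] by (auto simp: dominates_def closed_nbhd_def)

text \<open>A shortest walk from x to v enters v from a neighbour of v, which is u or a neighbour of u.\<close>
lemma dist_dominator_le:
  assumes "connected_graph V E" "u \<in> V" "v \<in> V" "x \<in> V" "dominates E u v"
  shows "dist V E x u \<le> dist V E x v + (if x = v then 1 else 0)"
proof (cases "x = v")
  case True
  then show ?thesis
    using dist_le_walk[of V E "[v, u]" v u] dominates_adjacent[OF assms(1,5)] assms(2,3)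
    by (cases "u = v") (auto simp: is_walk_Cons dist_self)
next
  case False
  obtain xs where xs: "is_walk V E xs" "hd xs = x" "last xs = v" "length xs = Suc (dist V E x v)"
    using obtain_shortest_walk[OF assms(1,4,3)] .
  define ys where "ys = butlast xs"
  have xs_eq: "xs = ys @ [v]"
    using xs unfolding ys_def by (metis append_butlast_last_id is_walk_def)
  have ys_ne: "ys \<noteq> []" using xs xs_eq False by auto
  have ys: "is_walk V E ys" "hd ys = x" "E (last ys) v"
    using xs xs_eq ys_ne by (auto simp: is_walk_append)
  have "E v (last ys)" using ys(3) connected_graph_sym[OF assms(1)] by blast
  then have "last ys = u \<or> E (last ys) u"
    using assms(5) connected_graph_sym[OF assms(1)] by (auto simp: dominates_def closed_nbhd_def)
  then have "dist V E x u \<le> length xs - 1"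
  proof
    assume "last ys = u"
    then show ?thesis using dist_le_walk[OF ys(1,2)] xs_eq by simp
  next
    assume "E (last ys) u"
    then have "is_walk V E (ys @ [u])"
      using ys ys_ne assms(2) by (simp add: is_walk_append is_walk_singleton)
    then show ?thesis using dist_le_walk[of V E "ys @ [u]"] ys ys_ne xs_eq by simp
  qed
  then show ?thesis using xs False by simp
qed

section \<open>Farness and dominated vertices\<close>

lemma dominates_refl: "dominates E v v"
  by (simp add: dominates_def)

lemma dist_set_le: "finite Y \<Longrightarrow> y \<in> Y \<Longrightarrow> dist_set V E x Y \<le> dist V E x y"
  by (simp add: dist_set_def)

lemma dist_set_attained:
  assumes "finite T" "T \<noteq> {}"
  obtains t where "t \<in> T" "dist_set V E x T = dist V E x t"
proof -
  have "dist_set V E x T \<in> dist V E x ` T"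
    unfolding dist_set_def using assms by (intro Min_in) auto
  then show ?thesis using that by blast
qed

lemma dist_set_le_dominated:
  assumes cg: "connected_graph V E" and "T \<subseteq> V" "Y \<subseteq> V" "T \<noteq> {}" "x \<in> V"
    and dom: "\<forall>t\<in>T. \<exists>u\<in>Y. dominates E u t"
  shows "dist_set V E x Y + (if x \<in> Y - T then 1 else 0)
           \<le> dist_set V E x T + (if x \<in> T - Y then 1 else 0)"
proof -
  have fin: "finite T" "finite Y"
    using assms(2,3) connected_graph_finite[OF cg] finite_subset by auto
  obtain t where t: "t \<in> T" "dist_set V E x T = dist V E x t"
    using dist_set_attained[OF fin(1) assms(4)] .
  obtain u where u: "u \<in> Y" "dominates E u t" using dom t(1) by blast
  have "u \<in> V" "t \<in> V" using u(1) t(1) assms(2,3) by auto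
  have "dist_set V E x Y \<le> dist V E x u" using dist_set_le[OF fin(2) u(1)] .
  also have "\<dots> \<le> dist V E x t + (if x = t then 1 else 0)"
    using dist_dominator_le[OF cg \<open>u \<in> V\<close> \<open>t \<in> V\<close> \<open>x \<in> V\<close> u(2)] .
  finally have near: "dist_set V E x Y \<le> dist_set V E x T + (if x = t then 1 else 0)"
    using t(2) by simp
  have "dist_set V E x Y = 0" if "x \<in> Y"
    using dist_set_le[OF fin(2) that, where V = V and E = E and x = x] dist_self[OF \<open>x \<in> V\<close>] by simp
  moreover have "dist_set V E x T \<noteq> 0" if "x \<notin> T"
    using t dist_eq_0_iff[OF cg \<open>x \<in> V\<close>, of t] that assms(2) by auto
  ultimately show ?thesis using near t(1) by (cases "x = t") auto
qed

lemma farness_le_dominated: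
  assumes cg: "connected_graph V E" and "T \<subseteq> V" "Y \<subseteq> V" "T \<noteq> {}" "card Y = card T"
    and "\<forall>t\<in>T. \<exists>u\<in>Y. dominates E u t"
  shows "farness V E Y \<le> farness V E T"
proof -
  have finV: "finite V" using connected_graph_finite[OF cg] .
  then have fin: "finite T" "finite Y" using assms(2,3) finite_subset by auto
  have count: "(\<Sum>x\<in>V. if x \<in> A then 1 else 0) = card A" if "A \<subseteq> V" for A
    using that finV by (simp add: sum.If_cases Int_absorb1)
  have "Y - T \<subseteq> V" "T - Y \<subseteq> V" using assms(2,3) by auto
  have "(\<Sum>x\<in>V. dist_set V E x Y + (if x \<in> Y - T then 1 else 0))
          \<le> (\<Sum>x\<in>V. dist_set V E x T + (if x \<in> T - Y then 1 else 0))"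
    by (rule sum_mono) (rule dist_set_le_dominated[OF assms(1-4) _ assms(6)])
  then have "farness V E Y + card (Y - T) \<le> farness V E T + card (T - Y)"
    unfolding farness_def sum.distrib count[OF \<open>Y - T \<subseteq> V\<close>] count[OF \<open>T - Y \<subseteq> V\<close>] .
  moreover have "card (Y - T) = card (T - Y)"
    using fin assms(5) by (simp add: card_Diff_subset_Int Int_commute)
  ultimately show ?thesis by simp
qed

lemma obtain_dominating_subset:
  assumes "finite V" and dom: "\<forall>v\<in>D. \<exists>u\<in>V - D. dominates E u v"
    and "T \<subseteq> V" "card T \<le> card (V - D)"
  obtains Y where "Y \<subseteq> V - D" "card Y = card T" "\<forall>t\<in>T. \<exists>u\<in>Y. dominates E u t"
proof -
  obtain g where g: "\<forall>v\<in>D. g v \<in> V - D \<and> dominates E (g v) v"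
    using bchoice[of D "\<lambda>v u. u \<in> V - D \<and> dominates E u v"] dom by blast
  define h where "h t = (if t \<in> D then g t else t)" for t
  have h_dom: "dominates E (h t) t" for t
    using g dominates_refl[of E t] by (simp add: h_def)
  have "h ` T \<subseteq> V - D" using g assms(3) by (auto simp: h_def)
  moreover have "card (h ` T) \<le> card T"
    using card_image_le[OF finite_subset[OF assms(3,1)]] .
  ultimately obtain Y where Y: "h ` T \<subseteq> Y" "Y \<subseteq> V - D" "card Y = card T"
    using exists_subset_between[of "h ` T" "card T" "V - D"] assms(1,4) by auto
  have "\<forall>t\<in>T. \<exists>u\<in>Y. dominates E u t"
    using Y(1) h_dom by blast
  with Y(2,3) show ?thesis using that by blast
qed

section \<open>Capture-free pairings\<close>

lemma rotate_half_keeps_key_only_in_majority: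
  fixes f :: "'a \<Rightarrow> 'b::linorder"
  assumes sorted: "sorted (map f L)" and i: "i < length L"
    and same: "f (rotate (length L div 2) L ! i) = f (L ! i)"
  shows "length L < 2 * length (filter (\<lambda>x. f x = f (L ! i)) L)"
proof -
  let ?m = "length L" and ?h = "length L div 2"
  have run: "b + 1 - a \<le> length (filter (\<lambda>x. f x = f (L ! i)) L)"
    if ab: "a \<le> b" "b < ?m" and ends: "f (L ! a) = f (L ! i)" "f (L ! b) = f (L ! i)" for a b
  proof -
    have "f (L ! t) = f (L ! i)" if "a \<le> t" "t \<le> b" for t
      using sorted_nth_mono[OF sorted, of a t] sorted_nth_mono[OF sorted, of t b] that ab ends
      by simp
    then have "{a..b} \<subseteq> {k. k < ?m \<and> f (L ! k) = f (L ! i)}" using ab by auto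
    then have "card {a..b} \<le> card {k. k < ?m \<and> f (L ! k) = f (L ! i)}"
      by (intro card_mono) auto
    then show ?thesis by (simp add: length_filter_conv_card)
  qed
  have same': "f (L ! ((?h + i) mod ?m)) = f (L ! i)" using same nth_rotate[OF i] by simp
  show ?thesis
  proof (cases "i + ?h < ?m")
    case True
    then show ?thesis using run[of i "i + ?h"] same' by (simp add: add.commute)
  next
    case False
    then have "(?h + i) mod ?m = ?h + i - ?m" using i by (simp add: mod_if)
    moreover have "2 * ?h \<le> ?m" by simp
    ultimately have "?m + 1 - ?h \<le> length (filter (\<lambda>x. f x = f (L ! i)) L)"
      using run[of "?h + i - ?m" i] same' i False by simp
    then show ?thesis using \<open>2 * ?h \<le> ?m\<close> by linarith
  qed
qed

text \<open>Sort N by colour and rotate by half its size: an element that keeps its colour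
  lies in a monochromatic run longer than half of N.\<close>
lemma obtain_perm_keeping_colour_only_in_majority:
  assumes "finite N"
  obtains p where "bij_betw p N N"
    "\<And>j. j \<in> N \<Longrightarrow> c (p j) = c j \<Longrightarrow> card N < 2 * card {j'\<in>N. c j' = c j}"
proof -
  obtain key :: "'b \<Rightarrow> nat" where key: "inj_on key (c ` N)"
    using finite_imp_inj_to_nat_seg[of "c ` N"] assms by blast
  obtain xs where xs: "set xs = N" "distinct xs" using finite_distinct_list[OF assms] by blast
  define L where "L = sort_key (key \<circ> c) xs"
  define R where "R = rotate (length L div 2) L"
  have L: "set L = N" "distinct L" "sorted (map (key \<circ> c) L)"
    using xs by (simp_all add: L_def)
  have nth_L: "bij_betw (nth L) {..<length L} N" and nth_R: "bij_betw (nth R) {..<length L} N"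
    using L by (simp_all add: R_def bij_betw_nth)
  define p where "p = nth R \<circ> inv_into {..<length L} (nth L)"
  have "bij_betw p N N"
    unfolding p_def using bij_betw_trans[OF bij_betw_inv_into[OF nth_L] nth_R] .
  moreover have "card N < 2 * card {j'\<in>N. c j' = c j}" if j: "j \<in> N" "c (p j) = c j" for j
  proof -
    obtain i where i: "i < length L" "L ! i = j"
      using j(1) L(1) by (metis in_set_conv_nth)
    have "p j = R ! i"
      using i(1) by (simp add: p_def i(2)[symmetric] bij_betw_inv_into_left[OF nth_L])
    then have "(key \<circ> c) (rotate (length L div 2) L ! i) = (key \<circ> c) (L ! i)"
      using j(2) i(2) by (simp add: R_def)
    from rotate_half_keeps_key_only_in_majority[OF L(3) i(1) this]
    have "length L < 2 * length (filter (\<lambda>x. key (c x) = key (c j)) L)" using i(2) by simp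
    moreover have "set (filter (\<lambda>x. key (c x) = key (c j)) L) = {j'\<in>N. c j' = c j}"
      using L(1) j(1) key by (auto dest: inj_onD)
    ultimately show ?thesis
      using L(1,2) distinct_card[of L] distinct_card[OF distinct_filter[OF L(2)]] by metis
  qed
  ultimately show ?thesis using that by blast
qed

definition captures :: "'c set \<Rightarrow> ('c \<Rightarrow> 's) \<Rightarrow> ('c \<Rightarrow> 'q) \<Rightarrow> 's \<Rightarrow> 'q \<Rightarrow> bool" where
  "captures C \<sigma> \<tau> s q \<longleftrightarrow> card {j\<in>C. \<tau> j = q} < 2 * card {j\<in>C. \<tau> j = q \<and> \<sigma> j = s}"

lemma captures_unique:
  assumes "finite C" "captures C \<sigma> \<tau> s1 q" "captures C \<sigma> \<tau> s2 q"
  shows "s1 = s2"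
proof (rule ccontr)
  assume "s1 \<noteq> s2"
  then have "card {j\<in>C. \<tau> j = q \<and> \<sigma> j = s1} + card {j\<in>C. \<tau> j = q \<and> \<sigma> j = s2}
      = card ({j\<in>C. \<tau> j = q \<and> \<sigma> j = s1} \<union> {j\<in>C. \<tau> j = q \<and> \<sigma> j = s2})"
    using assms(1) by (intro card_Un_disjoint[symmetric]) auto
  also have "\<dots> \<le> card {j\<in>C. \<tau> j = q}"
    using assms(1) by (intro card_mono) auto
  finally show False using assms(2,3) unfolding captures_def by linarith
qed

lemma bij_betw_fibrewise:
  assumes "finite C" and P: "\<And>q. bij_betw (P q) {j\<in>C. \<tau> j = q} {j\<in>C. \<tau> j = q}"
  shows "bij_betw (\<lambda>j. P (\<tau> j) j) C C"
proof -
  have into: "P (\<tau> j) j \<in> C \<and> \<tau> (P (\<tau> j) j) = \<tau> j" if "j \<in> C" for j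
    using bij_betwE[OF P[of "\<tau> j"]] that by auto
  have "inj_on (\<lambda>j. P (\<tau> j) j) C"
  proof (rule inj_onI)
    fix x y assume xy: "x \<in> C" "y \<in> C" "P (\<tau> x) x = P (\<tau> y) y"
    then have "\<tau> x = \<tau> y" using into by metis
    then show "x = y" using bij_betw_imp_inj_on[OF P[of "\<tau> x"]] xy by (auto dest: inj_onD)
  qed
  moreover have "(\<lambda>j. P (\<tau> j) j) ` C \<subseteq> C" using into by auto
  ultimately show ?thesis using endo_inj_surj[OF assms(1)] by (simp add: bij_betw_def)
qed

lemma obtain_fibrewise_perm:
  assumes "finite C"
  obtains \<pi> where "bij_betw \<pi> C C" "\<And>j. j \<in> C \<Longrightarrow> \<tau> (\<pi> j) = \<tau> j"
    "\<And>j. j \<in> C \<Longrightarrow> \<sigma> (\<pi> j) = \<sigma> j \<Longrightarrow> captures C \<sigma> \<tau> (\<sigma> j) (\<tau> j)"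
proof -
  define F where "F q = {j\<in>C. \<tau> j = q}" for q
  define good where "good q p \<longleftrightarrow> bij_betw p (F q) (F q) \<and>
    (\<forall>j\<in>F q. \<sigma> (p j) = \<sigma> j \<longrightarrow> card (F q) < 2 * card {j'\<in>F q. \<sigma> j' = \<sigma> j})" for q p
  have "\<exists>p. good q p" for q
  proof -
    have "finite (F q)" using assms by (simp add: F_def)
    then obtain p where "bij_betw p (F q) (F q)"
      "\<And>j. j \<in> F q \<Longrightarrow> \<sigma> (p j) = \<sigma> j \<Longrightarrow> card (F q) < 2 * card {j'\<in>F q. \<sigma> j' = \<sigma> j}"
      by (rule obtain_perm_keeping_colour_only_in_majority[where c = \<sigma>]) blast
    then show ?thesis unfolding good_def by blast
  qed
  then obtain P where "good q (P q)" for q by metis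
  then have P: "\<And>q. bij_betw (P q) (F q) (F q)"
    "\<And>q j. j \<in> F q \<Longrightarrow> \<sigma> (P q j) = \<sigma> j \<Longrightarrow> card (F q) < 2 * card {j'\<in>F q. \<sigma> j' = \<sigma> j}"
    unfolding good_def by blast+
  define \<pi> where "\<pi> j = P (\<tau> j) j" for j
  have "bij_betw \<pi> C C"
    unfolding \<pi>_def by (rule bij_betw_fibrewise[OF assms]) (use P(1) in \<open>simp add: F_def\<close>)
  moreover have "\<tau> (\<pi> j) = \<tau> j" if "j \<in> C" for j
    using bij_betwE[OF P(1)[of "\<tau> j"]] that by (auto simp: \<pi>_def F_def)
  moreover have "captures C \<sigma> \<tau> (\<sigma> j) (\<tau> j)" if "j \<in> C" "\<sigma> (\<pi> j) = \<sigma> j" for j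
  proof -
    have "{j'\<in>F (\<tau> j). \<sigma> j' = \<sigma> j} = {j'\<in>C. \<tau> j' = \<tau> j \<and> \<sigma> j' = \<sigma> j}"
      by (auto simp: F_def)
    then show ?thesis
      using P(2)[of j "\<tau> j"] that by (simp add: captures_def \<pi>_def F_def)
  qed
  ultimately show ?thesis using that by blast
qed

lemma obtain_map_fibres_le_2:
  assumes "finite A" "finite R" "card R \<le> 2 * card A"
  obtains g where "\<And>r. r \<in> R \<Longrightarrow> g r \<in> A" "\<And>a. card {r\<in>R. g r = a} \<le> 2"
  using assms
proof (induction A arbitrary: R thesis rule: finite_induct)
  case empty
  then show ?case by auto
next
  case (insert a A)
  obtain R2 where R2: "R2 \<subseteq> R" "card R2 = min 2 (card R)" "finite R2"
    by (rule obtain_subset_with_card_n[of "min 2 (card R)" R]) simp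
  have "card (R - R2) \<le> 2 * card A"
    using insert.prems(3) insert.hyps R2 by (simp add: card_Diff_subset)
  with insert.IH[of "R - R2"] insert.prems(2)
  obtain g where g: "\<And>r. r \<in> R - R2 \<Longrightarrow> g r \<in> A" "\<And>b. card {r\<in>R - R2. g r = b} \<le> 2"
    by blast
  define g' where "g' r = (if r \<in> R2 then a else g r)" for r
  have "card {r\<in>R. g' r = b} \<le> 2" for b
  proof (cases "b = a")
    case True
    then have "{r\<in>R. g' r = b} \<subseteq> R2" using g(1) insert.hyps(2) by (auto simp: g'_def)
    then have "card {r\<in>R. g' r = b} \<le> card R2" using R2(3) by (rule card_mono[rotated])
    then show ?thesis using R2(2) by linarith
  next
    case False
    then have "{r\<in>R. g' r = b} \<subseteq> {r\<in>R - R2. g r = b}" by (auto simp: g'_def)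
    then have "card {r\<in>R. g' r = b} \<le> card {r\<in>R - R2. g r = b}"
      using insert.prems(2) by (intro card_mono) auto
    then show ?thesis using g(2)[of b] by linarith
  qed
  moreover have "g' r \<in> insert a A" if "r \<in> R" for r using g(1) that by (simp add: g'_def)
  ultimately show ?case using insert.prems(1) by blast
qed

lemma card_le_twice_empty_plus_singletons:
  assumes "finite S" "finite Y" "card Y \<le> card S"
    and sub: "\<And>s. s \<in> S \<Longrightarrow> F s \<subseteq> Y"
    and disj: "\<And>s t. s \<in> S \<Longrightarrow> t \<in> S \<Longrightarrow> s \<noteq> t \<Longrightarrow> F s \<inter> F t = {}"
  shows "card Y \<le> 2 * card {s\<in>S. F s = {}} + card {s\<in>S. card (F s) = 1}"
proof -
  have fin: "finite (F s)" if "s \<in> S" for s using sub[OF that] assms(2) finite_subset by blast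
  have "(\<Sum>s\<in>S. card (F s)) = card (\<Union>s\<in>S. F s)"
    using assms(1) fin disj by (intro card_UN_disjoint[symmetric]) auto
  also have "\<dots> \<le> card Y" using sub assms(2) by (intro card_mono) auto
  finally have sum_le: "(\<Sum>s\<in>S. card (F s)) \<le> card Y" .
  have "(\<Sum>s\<in>S. 2) \<le> (\<Sum>s\<in>S. card (F s) + (if F s = {} then 2 else 0) + (if card (F s) = 1 then 1 else 0))"
    using fin by (intro sum_mono) (fastforce simp: card_0_eq[symmetric] simp del: card_0_eq)
  also have "\<dots> = (\<Sum>s\<in>S. card (F s)) + 2 * card {s\<in>S. F s = {}} + card {s\<in>S. card (F s) = 1}"
    using assms(1) by (simp add: sum.distrib sum.If_cases Int_def conj_commute)
  finally show ?thesis using sum_le assms(3) by simp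
qed

lemma card_not_solely_captured_le:
  assumes finS: "finite S" and finY: "finite Y" and card_le: "card Y \<le> card S"
    and unique: "\<And>q s t. q \<in> Y \<Longrightarrow> s \<in> S \<Longrightarrow> t \<in> S \<Longrightarrow> cap s q \<Longrightarrow> cap t q \<Longrightarrow> s = t"
  defines "F s \<equiv> {q\<in>Y. cap s q}"
  shows "card (Y - (\<Union>s\<in>{s\<in>S. card (F s) = 1}. F s)) \<le> 2 * card {s\<in>S. F s = {}}"
proof -
  have finF: "finite (F s)" for s using finY by (simp add: F_def)
  have disj: "F s \<inter> F t = {}" if "s \<in> S" "t \<in> S" "s \<noteq> t" for s t
    using unique that by (auto simp: F_def)
  have "card Y \<le> 2 * card {s\<in>S. F s = {}} + card {s\<in>S. card (F s) = 1}"
    by (rule card_le_twice_empty_plus_singletons[OF finS finY card_le _ disj]) (auto simp: F_def)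
  moreover have "card (\<Union>s\<in>{s\<in>S. card (F s) = 1}. F s) = card {s\<in>S. card (F s) = 1}"
    using finS finF disj by (subst card_UN_disjoint) auto
  moreover have "(\<Union>s\<in>{s\<in>S. card (F s) = 1}. F s) \<subseteq> Y" by (auto simp: F_def)
  ultimately show ?thesis using finY by (simp add: card_Diff_subset finite_subset)
qed

text \<open>An element of Y that is the only one captured by some s is paired with s; the
  others go, at most two each, to the elements of S capturing nothing.\<close>
lemma obtain_pairing:
  fixes cap :: "'s \<Rightarrow> 'q \<Rightarrow> bool"
  assumes finS: "finite S" and finY: "finite Y" and card_le: "card Y \<le> card S"
    and unique: "\<And>q s t. q \<in> Y \<Longrightarrow> s \<in> S \<Longrightarrow> t \<in> S \<Longrightarrow> cap s q \<Longrightarrow> cap t q \<Longrightarrow> s = t"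
  obtains \<rho> where "\<And>q. q \<in> Y \<Longrightarrow> \<rho> q \<in> S" "\<And>s. card {q\<in>Y. \<rho> q = s} \<le> 2"
    "\<And>q q'. q \<in> Y \<Longrightarrow> q' \<in> Y \<Longrightarrow> cap (\<rho> q) q' \<Longrightarrow> q' = q"
proof -
  define F where "F s = {q\<in>Y. cap s q}" for s
  define S0 where "S0 = {s\<in>S. F s = {}}"
  define S1 where "S1 = {s\<in>S. card (F s) = 1}"
  define U where "U = (\<Union>s\<in>S1. F s)"
  have "card (Y - U) \<le> 2 * card S0"
    unfolding U_def S0_def S1_def F_def
    using card_not_solely_captured_le[OF finS finY card_le unique] by simp
  then obtain g where g: "\<And>q. q \<in> Y - U \<Longrightarrow> g q \<in> S0" "\<And>s. card {q\<in>Y - U. g q = s} \<le> 2"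
    using obtain_map_fibres_le_2[of S0 "Y - U"] finS finY by (auto simp: S0_def)
  define \<rho> where "\<rho> q = (if q \<in> U then (SOME s. s \<in> S1 \<and> cap s q) else g q)" for q
  have \<rho>_U: "\<rho> q \<in> S1 \<and> cap (\<rho> q) q" if "q \<in> U" for q
    using that unfolding \<rho>_def U_def F_def by (auto intro: someI2)
  have \<rho>_not_U: "\<rho> q \<in> S0" if "q \<in> Y" "q \<notin> U" for q
    using g(1) that by (simp add: \<rho>_def)
  have S01: "S0 \<inter> S1 = {}" by (auto simp: S0_def S1_def)
  have "\<rho> q \<in> S" if "q \<in> Y" for q
    using \<rho>_U \<rho>_not_U that by (cases "q \<in> U") (auto simp: S0_def S1_def)
  moreover have "card {q\<in>Y. \<rho> q = s} \<le> 2" for s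
  proof (cases "s \<in> S1")
    case True
    then have "{q\<in>Y. \<rho> q = s} \<subseteq> F s"
      using \<rho>_U \<rho>_not_U S01 by (fastforce simp: F_def)
    then have "card {q\<in>Y. \<rho> q = s} \<le> card (F s)" by (rule card_mono[rotated]) (simp add: F_def finY)
    then show ?thesis using True by (simp add: S1_def)
  next
    case False
    then have "{q\<in>Y. \<rho> q = s} \<subseteq> {q\<in>Y - U. g q = s}"
      using \<rho>_U by (auto simp: \<rho>_def)
    then have "card {q\<in>Y. \<rho> q = s} \<le> card {q\<in>Y - U. g q = s}"
      using finY by (intro card_mono) auto
    then show ?thesis using g(2)[of s] by linarith
  qed
  moreover have "q' = q" if "q \<in> Y" "q' \<in> Y" "cap (\<rho> q) q'" for q q'
  proof (cases "q \<in> U")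
    case True
    then have "q \<in> F (\<rho> q)" "q' \<in> F (\<rho> q)" "card (F (\<rho> q)) = 1"
      using \<rho>_U that by (auto simp: F_def S1_def)
    then show ?thesis by (metis card_1_singletonE singletonD)
  next
    case False
    then have "F (\<rho> q) = {}" using \<rho>_not_U that(1) by (simp add: S0_def)
    then show ?thesis using that by (auto simp: F_def)
  qed
  ultimately show ?thesis using that by blast
qed

section \<open>Local search for k-median\<close>

definition connection_cost :: "'c set \<Rightarrow> ('c \<Rightarrow> 'f \<Rightarrow> nat) \<Rightarrow> 'f set \<Rightarrow> nat" where
  "connection_cost C d X = (\<Sum>j\<in>C. Min (d j ` X))"

lemma connection_cost_antimono:
  "finite X \<Longrightarrow> X' \<subseteq> X \<Longrightarrow> X' \<noteq> {} \<Longrightarrow> connection_cost C d X \<le> connection_cost C d X'"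
  unfolding connection_cost_def by (intro sum_mono Min_antimono) auto

lemma connection_cost_le_swap_if_local_optimum:
  assumes "finite S" "s \<in> S" "q \<in> W"
    and local_opt: "\<And>s w. s \<in> S \<Longrightarrow> w \<in> W - S \<Longrightarrow>
                      connection_cost C d S \<le> connection_cost C d (insert w (S - {s}))"
  shows "connection_cost C d S \<le> connection_cost C d (insert q (S - {s}))"
proof -
  consider "q \<notin> S" | "q = s" | "q \<in> S" "q \<noteq> s" by blast
  then show ?thesis
  proof cases
    case 1
    then show ?thesis using local_opt assms(2,3) by blast
  next
    case 2
    then show ?thesis using assms(2) by (simp add: insert_absorb)
  next
    case 3
    then have "insert q (S - {s}) = S - {s}" by blast
    then show ?thesis using connection_cost_antimono[OF assms(1), of "S - {s}"] 3 by auto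
  qed
qed

text \<open>The test swaps of Arya et al.: for each q in Y, \<rho> q is swapped out for q, and a client j
  of \<rho> q is rerouted to the facility \<sigma> (\<pi> j) of its partner \<pi> j.\<close>
locale swap_pairing =
  fixes C :: "'a set" and d :: "'a \<Rightarrow> 'a \<Rightarrow> nat" and S Y :: "'a set"
    and \<sigma> \<tau> \<pi> \<rho> :: "'a \<Rightarrow> 'a"
  assumes finite_C: "finite C" and S_subset: "S \<subseteq> C" and Y_subset: "Y \<subseteq> C"
    and d_commute: "\<And>x y. x \<in> C \<Longrightarrow> y \<in> C \<Longrightarrow> d x y = d y x"
    and d_triangle: "\<And>x y z. x \<in> C \<Longrightarrow> y \<in> C \<Longrightarrow> z \<in> C \<Longrightarrow> d x z \<le> d x y + d y z"
    and \<sigma>_in: "\<And>j. j \<in> C \<Longrightarrow> \<sigma> j \<in> S"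
    and \<sigma>_nearest: "\<And>j. j \<in> C \<Longrightarrow> d j (\<sigma> j) = Min (d j ` S)"
    and \<tau>_in: "\<And>j. j \<in> C \<Longrightarrow> \<tau> j \<in> Y"
    and \<tau>_nearest: "\<And>j. j \<in> C \<Longrightarrow> d j (\<tau> j) = Min (d j ` Y)"
    and \<pi>_bij: "bij_betw \<pi> C C"
    and \<tau>_\<pi>: "\<And>j. j \<in> C \<Longrightarrow> \<tau> (\<pi> j) = \<tau> j"
    and \<rho>_in: "\<And>q. q \<in> Y \<Longrightarrow> \<rho> q \<in> S"
    and \<rho>_fibre: "\<And>s. card {q\<in>Y. \<rho> q = s} \<le> 2"
    and \<rho>_no_capture: "\<And>j q. j \<in> C \<Longrightarrow> q \<in> Y \<Longrightarrow> \<sigma> j = \<rho> q \<Longrightarrow> \<sigma> (\<pi> j) = \<rho> q \<Longrightarrow> \<tau> j = q"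
begin

lemma finite_S: "finite S"
  using finite_C S_subset by (rule finite_subset[rotated])

lemma finite_Y: "finite Y"
  using finite_C Y_subset by (rule finite_subset[rotated])

lemma connection_cost_S: "connection_cost C d S = (\<Sum>j\<in>C. d j (\<sigma> j))"
  unfolding connection_cost_def by (simp add: \<sigma>_nearest)

lemma connection_cost_Y: "connection_cost C d Y = (\<Sum>j\<in>C. d j (\<tau> j))"
  unfolding connection_cost_def by (simp add: \<tau>_nearest)

definition detour :: "'a \<Rightarrow> nat" where
  "detour j = d j (\<tau> j) + d (\<pi> j) (\<tau> (\<pi> j)) + d (\<pi> j) (\<sigma> (\<pi> j))"

lemma d_reroute_le_detour:
  assumes "j \<in> C"
  shows "d j (\<sigma> (\<pi> j)) \<le> detour j"
proof -
  have in_C: "\<tau> j \<in> C" "\<pi> j \<in> C" "\<sigma> (\<pi> j) \<in> C"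
    using assms \<tau>_in Y_subset S_subset \<sigma>_in bij_betwE[OF \<pi>_bij] by blast+
  have "d j (\<sigma> (\<pi> j)) \<le> d j (\<tau> j) + d (\<tau> j) (\<sigma> (\<pi> j))"
    using d_triangle assms in_C by blast
  also have "d (\<tau> j) (\<sigma> (\<pi> j)) \<le> d (\<tau> j) (\<pi> j) + d (\<pi> j) (\<sigma> (\<pi> j))"
    using d_triangle in_C by blast
  also have "d (\<tau> j) (\<pi> j) = d (\<pi> j) (\<tau> (\<pi> j))"
    using d_commute in_C \<tau>_\<pi>[OF assms] by simp
  finally show ?thesis by (simp add: detour_def)
qed

lemma d_nearest_le_detour:
  assumes "j \<in> C"
  shows "d j (\<sigma> j) \<le> detour j"
proof -
  have "\<sigma> (\<pi> j) \<in> S" using assms \<sigma>_in bij_betwE[OF \<pi>_bij] by blast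
  then have "d j (\<sigma> j) \<le> d j (\<sigma> (\<pi> j))"
    using finite_S by (simp add: \<sigma>_nearest[OF assms])
  then show ?thesis using d_reroute_le_detour[OF assms] by simp
qed

definition swap_bound :: "'a \<Rightarrow> 'a \<Rightarrow> nat" where
  "swap_bound q j = (if \<tau> j = q then d j (\<tau> j) else if \<sigma> j = \<rho> q then detour j else d j (\<sigma> j))"

text \<open>After swapping \<rho> q for q, a client of q moves to q, a client of \<rho> q is rerouted
  to \<sigma> (\<pi> j), which survives the swap because \<rho> q captures no facility other than q,
  and every other client keeps \<sigma> j.\<close>
lemma Min_swap_le_swap_bound:
  assumes "j \<in> C" "q \<in> Y"
  shows "Min (d j ` insert q (S - {\<rho> q})) \<le> swap_bound q j"
proof -
  have le: "Min (d j ` insert q (S - {\<rho> q})) \<le> d j x" if "x \<in> insert q (S - {\<rho> q})" for x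
    using finite_S that by (intro Min_le) auto
  consider "\<tau> j = q" | "\<tau> j \<noteq> q" "\<sigma> j = \<rho> q" | "\<tau> j \<noteq> q" "\<sigma> j \<noteq> \<rho> q" by blast
  then show ?thesis
  proof cases
    case 1
    then show ?thesis using le[of q] by (simp add: swap_bound_def)
  next
    case 2
    then have "\<sigma> (\<pi> j) \<in> S - {\<rho> q}"
      using \<rho>_no_capture[OF assms] \<sigma>_in bij_betwE[OF \<pi>_bij] assms(1) by blast
    then show ?thesis
      using le[of "\<sigma> (\<pi> j)"] d_reroute_le_detour[OF assms(1)] 2 by (simp add: swap_bound_def)
  next
    case 3
    then show ?thesis using le[of "\<sigma> j"] \<sigma>_in[OF assms(1)] by (simp add: swap_bound_def)
  qed
qed

lemma sum_swap_bound_le: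
  assumes "j \<in> C"
  shows "(\<Sum>q\<in>Y. int (swap_bound q j))
           \<le> int (card Y) * int (d j (\<sigma> j)) + (int (d j (\<tau> j)) - int (d j (\<sigma> j)))
              + 2 * (int (detour j) - int (d j (\<sigma> j)))"
proof -
  let ?s = "int (d j (\<sigma> j))" and ?t = "int (d j (\<tau> j))" and ?x = "int (detour j)"
  have excess: "0 \<le> ?x - ?s" using d_nearest_le_detour[OF assms] by simp
  have "(\<Sum>q\<in>Y. int (swap_bound q j))
          \<le> (\<Sum>q\<in>Y. ?s + (if \<tau> j = q then ?t - ?s else 0) + (if \<rho> q = \<sigma> j then ?x - ?s else 0))"
    using excess by (intro sum_mono) (auto simp: swap_bound_def)
  also have "\<dots> = int (card Y) * ?s + (?t - ?s) + int (card {q\<in>Y. \<rho> q = \<sigma> j}) * (?x - ?s)"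
    using finite_Y \<tau>_in[OF assms] by (simp add: sum.distrib sum.If_cases Int_def conj_commute)
  also have "\<dots> \<le> int (card Y) * ?s + (?t - ?s) + 2 * (?x - ?s)"
    using mult_right_mono[OF _ excess, of "int (card {q\<in>Y. \<rho> q = \<sigma> j})" 2] \<rho>_fibre[of "\<sigma> j"]
    by simp
  finally show ?thesis .
qed

lemma sum_detour: "(\<Sum>j\<in>C. detour j) = 2 * connection_cost C d Y + connection_cost C d S"
proof -
  have "(\<Sum>j\<in>C. d (\<pi> j) (\<tau> (\<pi> j))) = connection_cost C d Y"
    using sum.reindex_bij_betw[OF \<pi>_bij, of "\<lambda>j. d j (\<tau> j)"] connection_cost_Y by simp
  moreover have "(\<Sum>j\<in>C. d (\<pi> j) (\<sigma> (\<pi> j))) = connection_cost C d S"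
    using sum.reindex_bij_betw[OF \<pi>_bij, of "\<lambda>j. d j (\<sigma> j)"] connection_cost_S by simp
  ultimately show ?thesis by (simp add: detour_def sum.distrib connection_cost_Y)
qed

theorem connection_cost_le_5:
  assumes local_opt: "\<And>q. q \<in> Y \<Longrightarrow> connection_cost C d S \<le> connection_cost C d (insert q (S - {\<rho> q}))"
  shows "connection_cost C d S \<le> 5 * connection_cost C d Y"
proof -
  let ?S = "int (connection_cost C d S)" and ?Y = "int (connection_cost C d Y)"
  have "int (card Y) * ?S = (\<Sum>q\<in>Y. ?S)" by simp
  also have "\<dots> \<le> (\<Sum>q\<in>Y. \<Sum>j\<in>C. int (swap_bound q j))"
  proof (intro sum_mono)
    fix q assume "q \<in> Y"
    have "connection_cost C d S \<le> (\<Sum>j\<in>C. swap_bound q j)"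
      using local_opt[OF \<open>q \<in> Y\<close>] Min_swap_le_swap_bound[OF _ \<open>q \<in> Y\<close>]
      unfolding connection_cost_def by (meson order_trans sum_mono)
    then show "?S \<le> (\<Sum>j\<in>C. int (swap_bound q j))" by (simp flip: of_nat_sum)
  qed
  also have "\<dots> = (\<Sum>j\<in>C. \<Sum>q\<in>Y. int (swap_bound q j))" by (rule sum.swap)
  also have "\<dots> \<le> (\<Sum>j\<in>C. int (card Y) * int (d j (\<sigma> j))
                   + (int (d j (\<tau> j)) - int (d j (\<sigma> j))) + 2 * (int (detour j) - int (d j (\<sigma> j))))"
    by (intro sum_mono sum_swap_bound_le)
  also have "\<dots> = int (card Y) * ?S + (?Y - ?S) + 2 * (int (\<Sum>j\<in>C. detour j) - ?S)"
    unfolding connection_cost_S connection_cost_Y of_nat_sum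
    by (simp only: sum.distrib sum_subtractf flip: sum_distrib_left)
  finally show ?thesis by (simp add: sum_detour)
qed

end

lemma obtain_nearest_map:
  fixes d :: "'c \<Rightarrow> 'f \<Rightarrow> 'b::linorder"
  assumes "finite X" "X \<noteq> {}"
  obtains \<sigma> where "\<And>j. \<sigma> j \<in> X" "\<And>j. d j (\<sigma> j) = Min (d j ` X)"
proof -
  have "Min (d j ` X) \<in> d j ` X" for j
    using assms by (intro Min_in) auto
  then have "\<exists>x\<in>X. d j x = Min (d j ` X)" for j by (metis imageE)
  then obtain \<sigma> where "\<forall>j. \<sigma> j \<in> X \<and> d j (\<sigma> j) = Min (d j ` X)" by metis
  then show ?thesis using that by blast
qed

theorem connection_cost_local_optimum_le_5:
  fixes d :: "'a \<Rightarrow> 'a \<Rightarrow> nat"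
  assumes finC: "finite C" and "S \<subseteq> C" "Y \<subseteq> C" "S \<noteq> {}" "Y \<noteq> {}" "card Y \<le> card S"
    and "\<And>x y. x \<in> C \<Longrightarrow> y \<in> C \<Longrightarrow> d x y = d y x"
    and "\<And>x y z. x \<in> C \<Longrightarrow> y \<in> C \<Longrightarrow> z \<in> C \<Longrightarrow> d x z \<le> d x y + d y z"
    and local_opt: "\<And>s q. s \<in> S \<Longrightarrow> q \<in> Y \<Longrightarrow>
                      connection_cost C d S \<le> connection_cost C d (insert q (S - {s}))"
  shows "connection_cost C d S \<le> 5 * connection_cost C d Y"
proof -
  have finS: "finite S" and finY: "finite Y" using finC assms(2,3) finite_subset by auto
  obtain \<sigma> where \<sigma>: "\<And>j. \<sigma> j \<in> S" "\<And>j. d j (\<sigma> j) = Min (d j ` S)"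
    by (rule obtain_nearest_map[OF finS \<open>S \<noteq> {}\<close>, where d = d]) blast
  obtain \<tau> where \<tau>: "\<And>j. \<tau> j \<in> Y" "\<And>j. d j (\<tau> j) = Min (d j ` Y)"
    by (rule obtain_nearest_map[OF finY \<open>Y \<noteq> {}\<close>, where d = d]) blast
  obtain \<pi> where \<pi>: "bij_betw \<pi> C C" "\<And>j. j \<in> C \<Longrightarrow> \<tau> (\<pi> j) = \<tau> j"
    "\<And>j. j \<in> C \<Longrightarrow> \<sigma> (\<pi> j) = \<sigma> j \<Longrightarrow> captures C \<sigma> \<tau> (\<sigma> j) (\<tau> j)"
    by (rule obtain_fibrewise_perm[OF finC, where \<sigma> = \<sigma> and \<tau> = \<tau>]) blast
  obtain \<rho> where \<rho>: "\<And>q. q \<in> Y \<Longrightarrow> \<rho> q \<in> S" "\<And>s. card {q\<in>Y. \<rho> q = s} \<le> 2"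
    "\<And>q q'. q \<in> Y \<Longrightarrow> q' \<in> Y \<Longrightarrow> captures C \<sigma> \<tau> (\<rho> q) q' \<Longrightarrow> q' = q"
    using captures_unique[OF finC, of \<sigma> \<tau>]
    by (rule obtain_pairing[OF finS finY \<open>card Y \<le> card S\<close>, where cap = "captures C \<sigma> \<tau>"]) blast+
  have no_capture: "\<tau> j = q" if "j \<in> C" "q \<in> Y" "\<sigma> j = \<rho> q" "\<sigma> (\<pi> j) = \<rho> q" for j q
    using \<pi>(3)[OF that(1)] \<rho>(3)[OF that(2) \<tau>(1)] that(3,4) by metis
  interpret swap_pairing C d S Y \<sigma> \<tau> \<pi> \<rho>
    by unfold_locales (fact finC assms(2,3,7,8) \<pi>(1,2) \<rho>(1,2) no_capture | simp add: \<sigma> \<tau>)+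
  show ?thesis by (rule connection_cost_le_5) (use local_opt \<rho>(1) in blast)
qed

section \<open>Local search for group farness\<close>

lemma farness_eq_connection_cost: "farness V E X = connection_cost V (dist V E) X"
  by (simp add: farness_def dist_set_def connection_cost_def)

theorem farness_local_optimum_le_5:
  assumes cg: "connected_graph V E" and "W \<subseteq> V" "S \<subseteq> W" "Y \<subseteq> W"
    and "S \<noteq> {}" "Y \<noteq> {}" "card Y \<le> card S"
    and local_opt: "\<forall>s\<in>S. \<forall>w\<in>W - S. farness V E (insert w (S - {s})) \<ge> farness V E S"
  shows "farness V E S \<le> 5 * farness V E Y"
  unfolding farness_eq_connection_cost
proof (rule connection_cost_local_optimum_le_5)
  show finV: "finite V" using connected_graph_finite[OF cg] .
  show "S \<subseteq> V" "Y \<subseteq> V" using assms(2-4) by auto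
  then have finS: "finite S" using finV finite_subset by blast
  have local_opt_cost: "connection_cost V (dist V E) S \<le> connection_cost V (dist V E) (insert w (S - {s}))"
    if "s \<in> S" "w \<in> W - S" for s w
    using local_opt that by (simp add: farness_eq_connection_cost)
  show "connection_cost V (dist V E) S \<le> connection_cost V (dist V E) (insert q (S - {s}))"
    if "s \<in> S" "q \<in> Y" for s q
    using that(2) assms(4) by (intro connection_cost_le_swap_if_local_optimum[OF finS that(1) _ local_opt_cost]) auto
  show "dist V E x y = dist V E y x" if "x \<in> V" "y \<in> V" for x y
    using dist_commute[OF cg that] .
  show "dist V E x z \<le> dist V E x y + dist V E y z" if "x \<in> V" "y \<in> V" "z \<in> V" for x y z
    using dist_triangle[OF cg that] .
qed (fact assms(5-7))+

lemma obtain_card_subset_minimising: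
  fixes f :: "'a set \<Rightarrow> 'b::linorder"
  assumes "finite V" "k \<le> card V"
  obtains T where "T \<subseteq> V" "card T = k" "f T = Min {f T | T. T \<subseteq> V \<and> card T = k}"
proof -
  let ?M = "{f T | T. T \<subseteq> V \<and> card T = k}"
  have "?M \<subseteq> f ` Pow V" by blast
  then have fin: "finite ?M" by (rule finite_subset) (simp add: assms(1))
  obtain T0 where "T0 \<subseteq> V" "card T0 = k"
    by (rule obtain_subset_with_card_n[OF assms(2)]) blast
  then have "?M \<noteq> {}" by blast
  with fin have "Min ?M \<in> ?M" by (rule Min_in)
  then obtain T where "T \<subseteq> V" "card T = k" "f T = Min ?M" by auto
  then show ?thesis by (rule that)
qed

theorem mainTheorem3:
  fixes V :: "'a set" and E :: "'a \<Rightarrow> 'a \<Rightarrow> bool" and D S :: "'a set" and k :: nat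
  assumes "connected_graph V E"
    and "1 \<le> k" and "k \<le> card V"
    and "D \<subseteq> V"
    and "\<forall>v\<in>D. \<exists>u\<in>V - D. dominates E u v"
    and "card (V - D) \<ge> k"
    and "S \<subseteq> V - D" and "card S = k"
    and "\<forall>s\<in>S. \<forall>w\<in>(V - D) - S. farness V E (insert w (S - {s})) \<ge> farness V E S"
  shows "farness V E S \<le> 5 * Min {farness V E T | T. T \<subseteq> V \<and> card T = k}"
proof -
  note cg = assms(1)
  have finV: "finite V" using connected_graph_finite[OF cg] .
  obtain T where T: "T \<subseteq> V" "card T = k" "farness V E T = Min {farness V E T | T. T \<subseteq> V \<and> card T = k}"
    using obtain_card_subset_minimising[OF finV assms(3)] .
  have "card T \<le> card (V - D)" using T(2) assms(6) by simp
  then obtain Y where Y: "Y \<subseteq> V - D" "card Y = card T" "\<forall>t\<in>T. \<exists>u\<in>Y. dominates E u t"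
    by (rule obtain_dominating_subset[OF finV assms(5) T(1)]) blast
  have "T \<noteq> {}" using T(2) assms(2) by auto
  then have Y_le_T: "farness V E Y \<le> farness V E T"
    using farness_le_dominated[OF cg T(1) _ _ Y(2,3)] Y(1) by blast
  have "S \<noteq> {}" "Y \<noteq> {}" "card Y \<le> card S"
    using assms(2,8) Y(2) T(2) by auto
  then have S_le_Y: "farness V E S \<le> 5 * farness V E Y"
    by (rule farness_local_optimum_le_5[OF cg Diff_subset assms(7) Y(1) _ _ _ assms(9)])
  show ?thesis using S_le_Y Y_le_T T(3) by linarith
qed

end
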